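(* Let $\mathbb{K}$ be an $\aleph_0$-complete field and $x=(x_1,\ldots,x_n)$. Let $F$ be a finite system of polynomial equations, with coefficients in $\mathbb{K}[\![x]\!]$, in unknowns $z_1,\ldots,z_q$ and some of their partial derivatives $\partial^{|j_1|}z_{i_1}/\partial x^{j_1},\ldots,\partial^{|j_s|}z_{i_s}/\partial x^{j_s}$, where $i_1,\ldots,i_s\in\{1,\ldots,q\}$ and $j_1,\ldots,j_s\in\mathbb{N}^n$. If $F=0$ has approximate solutions up to any order, i.e. for every $c\in\mathbb{N}$ there exists $z\in\mathbb{K}[\![x]\!]^q$ such that $F$ evaluated at $z$ and its corresponding partial derivatives lies in $(x)^c$, then $F=0$ has a solution $z\in\mathbb{K}[\![x]\!]^q$.
   Context: A field $\mathbb{K}$ is called $\aleph_0$-complete if every countable system $\mathcal S$ of polynomial equations with coefficients in $\mathbb{K}$ (in a countable number of indeterminates) has a solution in $\mathbb{K}$ if and only if every finite sub-system of $\mathcal S$ has a solution in $\mathbb{K}$. $(x)$ is the maximal ideal of $\mathbb{K}[\![x]\!]$; for $j=(j^1,\ldots,j^n)\in\mathbb{N}^n$, $|j|=j^1+\cdots+j^n$ and $\partial^{|j|}/\partial x^j$ denotes the formal partial derivative $\partial^{|j|}/\partial x_1^{j^1}\cdots\partial x_n^{j^n}$. *)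

theory Defs
  imports Main "HOL-Library.Poly_Mapping" "HOL-Library.Countable_Set"
begin

text \<open>A polynomial over 'k in countably many indeterminates X_0, X_1, ... is an element
of poly_mapping from monomials to k (monomial = finitely supported exponent vector).\<close>

type_synonym 'k cpoly = "(nat \<Rightarrow>\<^sub>0 nat) \<Rightarrow>\<^sub>0 'k"

definition cpoly_eval :: "'k::field cpoly \<Rightarrow> (nat \<Rightarrow> 'k) \<Rightarrow> 'k" where
  "cpoly_eval p a = (\<Sum>m\<in>Poly_Mapping.keys p. Poly_Mapping.lookup p m * (\<Prod>i\<in>Poly_Mapping.keys m. a i ^ Poly_Mapping.lookup m i))"

definition aleph0_complete :: "'k::field itself \<Rightarrow> bool" where
  "aleph0_complete _ \<longleftrightarrow>
     (\<forall>S :: 'k cpoly set. countable S \<longrightarrow>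
        ((\<exists>a. \<forall>p\<in>S. cpoly_eval p a = 0) \<longleftrightarrow>
         (\<forall>T\<subseteq>S. finite T \<longrightarrow> (\<exists>a. \<forall>p\<in>T. cpoly_eval p a = 0))))"

type_synonym ('n, 'k) pser = "('n \<Rightarrow> nat) \<Rightarrow> 'k"

definition ps_one :: "('n, 'k::field) pser" where
  "ps_one \<alpha> = (if \<alpha> = (\<lambda>_. 0) then 1 else 0)"

definition ps_mult :: "('n::finite, 'k::field) pser \<Rightarrow> ('n, 'k) pser \<Rightarrow> ('n, 'k) pser" where
  "ps_mult f g \<alpha> = (\<Sum>\<beta>\<in>{\<beta>. \<beta> \<le> \<alpha>}. f \<beta> * g (\<lambda>i. \<alpha> i - \<beta> i))"

definition ps_pow :: "('n::finite, 'k::field) pser \<Rightarrow> nat \<Rightarrow> ('n, 'k) pser" where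
  "ps_pow f k = (ps_mult f ^^ k) ps_one"

text \<open>Formal partial derivative d^{|j|}/dx^j: coefficient of x^\<alpha> in d^j f is
  f_{\<alpha>+j} * prod_i (\<alpha>_i + j_i)! / \<alpha>_i!.\<close>

definition ps_deriv :: "('n::finite \<Rightarrow> nat) \<Rightarrow> ('n, 'k::field) pser \<Rightarrow> ('n, 'k) pser" where
  "ps_deriv j f \<alpha> = of_nat (\<Prod>i\<in>UNIV. fact (\<alpha> i + j i) div fact (\<alpha> i)) * f (\<lambda>i. \<alpha> i + j i)"

definition in_max_ideal_pow :: "nat \<Rightarrow> ('n::finite, 'k::field) pser \<Rightarrow> bool" where
  "in_max_ideal_pow c f \<longleftrightarrow> (\<forall>\<alpha>. (\<Sum>i\<in>UNIV. \<alpha> i) < c \<longrightarrow> f \<alpha> = 0)"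

definition is_pspoly :: "nat \<Rightarrow> ((nat \<Rightarrow> nat) \<Rightarrow> ('n, 'k::zero) pser) \<Rightarrow> bool" where
  "is_pspoly s P \<longleftrightarrow> finite {m. P m \<noteq> (\<lambda>_. 0)} \<and>
     (\<forall>m. P m \<noteq> (\<lambda>_. 0) \<longrightarrow> (\<forall>k\<ge>s. m k = 0))"

definition ps_monom :: "nat \<Rightarrow> (nat \<Rightarrow> ('n::finite, 'k::field) pser) \<Rightarrow> (nat \<Rightarrow> nat) \<Rightarrow> ('n, 'k) pser" where
  "ps_monom s y m = foldr (\<lambda>k acc. ps_mult (ps_pow (y k) (m k)) acc) [0..<s] ps_one"

definition pspoly_eval :: "nat \<Rightarrow> ((nat \<Rightarrow> nat) \<Rightarrow> ('n::finite, 'k::field) pser)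
    \<Rightarrow> (nat \<Rightarrow> ('n, 'k) pser) \<Rightarrow> ('n, 'k) pser" where
  "pspoly_eval s P y = (\<lambda>\<alpha>. \<Sum>m\<in>{m. P m \<noteq> (\<lambda>_. 0)}. ps_mult (P m) (ps_monom s y m) \<alpha>)"

text \<open>The differential system: the k-th unknown (k < s) of each polynomial is substituted by
  d^{|der k|} z_{idx k} / dx^{der k}.\<close>

definition subst_derivs :: "(nat \<Rightarrow> nat) \<Rightarrow> (nat \<Rightarrow> ('n::finite \<Rightarrow> nat)) \<Rightarrow> (nat \<Rightarrow> ('n, 'k::field) pser)
    \<Rightarrow> nat \<Rightarrow> ('n, 'k) pser" where
  "subst_derivs idx der z k = ps_deriv (der k) (z (idx k))"

end

theory Submission
  imports Defs
begin

text \<open>Each coefficient of the series obtained by substituting z and its partial derivatives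
  into F is a polynomial, with coefficients in K, in the countably many coefficients of
  z_1, ..., z_q. An approximate solution of order c annihilates all coefficients of total
  degree below c, so every finite set of these polynomial equations has a solution in K, and
  aleph_0-completeness yields a common solution of all of them, i.e. an exact solution z.\<close>

definition monomial_value :: "(nat \<Rightarrow>\<^sub>0 nat) \<Rightarrow> (nat \<Rightarrow> 'k::field) \<Rightarrow> 'k" where
  "monomial_value m a = (\<Prod>i\<in>Poly_Mapping.keys m. a i ^ Poly_Mapping.lookup m i)"

lemma monomial_value_eq_prod_superset:
  assumes "finite S" "Poly_Mapping.keys m \<subseteq> S"
  shows "monomial_value m a = (\<Prod>i\<in>S. a i ^ Poly_Mapping.lookup m i)"
  unfolding monomial_value_def
  by (rule prod.mono_neutral_left) (use assms in \<open>auto simp: in_keys_iff\<close>)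

lemma monomial_value_add: "monomial_value (m + m') a = monomial_value m a * monomial_value m' a"
proof -
  let ?S = "Poly_Mapping.keys m \<union> Poly_Mapping.keys m'"
  have "monomial_value (m + m') a = (\<Prod>i\<in>?S. a i ^ Poly_Mapping.lookup (m + m') i)"
    by (rule monomial_value_eq_prod_superset) (auto dest: keys_add[THEN subsetD])
  also have "\<dots> = (\<Prod>i\<in>?S. a i ^ Poly_Mapping.lookup m i * a i ^ Poly_Mapping.lookup m' i)"
    by (simp add: lookup_add power_add)
  also have "\<dots> = monomial_value m a * monomial_value m' a"
    by (simp add: prod.distrib monomial_value_eq_prod_superset[of ?S])
  finally show ?thesis .
qed

lemma cpoly_eval_eq_sum_superset:
  assumes "finite S" "Poly_Mapping.keys p \<subseteq> S"
  shows "cpoly_eval p a = (\<Sum>m\<in>S. Poly_Mapping.lookup p m * monomial_value m a)"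
  unfolding cpoly_eval_def monomial_value_def[symmetric]
  by (rule sum.mono_neutral_left) (use assms in \<open>auto simp: in_keys_iff\<close>)

lemma cpoly_eval_add: "cpoly_eval (p + q) a = cpoly_eval p a + cpoly_eval q a"
proof -
  let ?S = "Poly_Mapping.keys p \<union> Poly_Mapping.keys q"
  have "cpoly_eval (p + q) a = (\<Sum>m\<in>?S. Poly_Mapping.lookup (p + q) m * monomial_value m a)"
    by (rule cpoly_eval_eq_sum_superset) (auto dest: keys_add[THEN subsetD])
  also have "\<dots> = cpoly_eval p a + cpoly_eval q a"
    by (simp add: lookup_add distrib_right sum.distrib cpoly_eval_eq_sum_superset[of ?S])
  finally show ?thesis .
qed

lemma cpoly_eval_single: "cpoly_eval (Poly_Mapping.single m c) a = c * monomial_value m a"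
  by (subst cpoly_eval_eq_sum_superset[of "{m}"]) auto

text \<open>Lists of (monomial, coefficient) pairs are unnormalized polynomials, on which
  products are easy to form.\<close>

definition terms_eval :: "((nat \<Rightarrow>\<^sub>0 nat) \<times> 'k::field) list \<Rightarrow> (nat \<Rightarrow> 'k) \<Rightarrow> 'k" where
  "terms_eval L a = (\<Sum>(m, c)\<leftarrow>L. c * monomial_value m a)"

definition cpoly_of_terms :: "((nat \<Rightarrow>\<^sub>0 nat) \<times> 'k::field) list \<Rightarrow> 'k cpoly" where
  "cpoly_of_terms L = (\<Sum>(m, c)\<leftarrow>L. Poly_Mapping.single m c)"

lemma cpoly_eval_cpoly_of_terms: "cpoly_eval (cpoly_of_terms L) a = terms_eval L a"
proof (induction L)
  case Nil
  then show ?case by (simp add: cpoly_of_terms_def terms_eval_def cpoly_eval_def)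
next
  case (Cons t L)
  then show ?case
    by (cases t) (simp add: cpoly_of_terms_def terms_eval_def cpoly_eval_add cpoly_eval_single)
qed

definition terms_mult ::
    "((nat \<Rightarrow>\<^sub>0 nat) \<times> 'k::field) list \<Rightarrow> ((nat \<Rightarrow>\<^sub>0 nat) \<times> 'k) list \<Rightarrow> ((nat \<Rightarrow>\<^sub>0 nat) \<times> 'k) list"
  where "terms_mult L L' = concat (map (\<lambda>(m, c). map (\<lambda>(m', c'). (m + m', c * c')) L') L)"

lemma terms_eval_terms_mult: "terms_eval (terms_mult L L') a = terms_eval L a * terms_eval L' a"
proof (induction L)
  case Nil
  then show ?case by (simp add: terms_eval_def terms_mult_def)
next
  case (Cons t L)
  obtain m c where t: "t = (m, c)" by force
  have "terms_eval (map (\<lambda>(m', c'). (m + m', c * c')) L') a = c * monomial_value m a * terms_eval L' a"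
    by (induction L') (auto simp: terms_eval_def monomial_value_add algebra_simps)
  with Cons show ?case by (simp add: t terms_eval_def terms_mult_def algebra_simps)
qed

definition polynomial_function :: "((nat \<Rightarrow> 'k::field) \<Rightarrow> 'k) \<Rightarrow> bool" where
  "polynomial_function G \<longleftrightarrow> (\<exists>p. \<forall>a. G a = cpoly_eval p a)"

lemma polynomial_function_iff_terms:
  "polynomial_function G \<longleftrightarrow> (\<exists>L. \<forall>a. G a = terms_eval L a)"
proof
  assume "polynomial_function G"
  then obtain p where p: "\<And>a. G a = cpoly_eval p a" unfolding polynomial_function_def by blast
  obtain ms where ms: "set ms = Poly_Mapping.keys p" "distinct ms"
    using finite_distinct_list[OF finite_keys[of p]] by blast
  have "G a = terms_eval (map (\<lambda>m. (m, Poly_Mapping.lookup p m)) ms) a" for a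
  proof -
    have "G a = (\<Sum>m\<in>set ms. Poly_Mapping.lookup p m * monomial_value m a)"
      unfolding p ms(1) by (rule cpoly_eval_eq_sum_superset) simp_all
    also have "\<dots> = (\<Sum>m\<leftarrow>ms. Poly_Mapping.lookup p m * monomial_value m a)"
      by (rule sum_list_distinct_conv_sum_set[symmetric]) (rule ms(2))
    finally show ?thesis by (simp add: terms_eval_def comp_def)
  qed
  then show "\<exists>L. \<forall>a. G a = terms_eval L a" by blast
next
  assume "\<exists>L. \<forall>a. G a = terms_eval L a"
  then obtain L where "\<And>a. G a = terms_eval L a" by blast
  then have "\<forall>a. G a = cpoly_eval (cpoly_of_terms L) a" by (simp add: cpoly_eval_cpoly_of_terms)
  then show "polynomial_function G" unfolding polynomial_function_def by blast
qed

lemma polynomial_function_const: "polynomial_function (\<lambda>a. c)"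
  unfolding polynomial_function_iff_terms
  by (rule exI[of _ "[(0, c)]"]) (simp add: terms_eval_def monomial_value_def)

lemma polynomial_function_var: "polynomial_function (\<lambda>a. a i)"
  unfolding polynomial_function_iff_terms
  by (rule exI[of _ "[(Poly_Mapping.single i 1, 1)]"]) (simp add: terms_eval_def monomial_value_def)

lemma polynomial_function_add:
  "polynomial_function G \<Longrightarrow> polynomial_function H \<Longrightarrow> polynomial_function (\<lambda>a. G a + H a)"
proof -
  assume "polynomial_function G" "polynomial_function H"
  then obtain L L' where "\<And>a. G a = terms_eval L a" "\<And>a. H a = terms_eval L' a"
    unfolding polynomial_function_iff_terms by blast
  then have "G a + H a = terms_eval (L @ L') a" for a by (simp add: terms_eval_def)
  then show ?thesis unfolding polynomial_function_iff_terms by blast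
qed

lemma polynomial_function_mult:
  "polynomial_function G \<Longrightarrow> polynomial_function H \<Longrightarrow> polynomial_function (\<lambda>a. G a * H a)"
proof -
  assume "polynomial_function G" "polynomial_function H"
  then obtain L L' where "\<And>a. G a = terms_eval L a" "\<And>a. H a = terms_eval L' a"
    unfolding polynomial_function_iff_terms by blast
  then have "G a * H a = terms_eval (terms_mult L L') a" for a
    by (simp add: terms_eval_terms_mult)
  then show ?thesis unfolding polynomial_function_iff_terms by blast
qed

lemma polynomial_function_sum:
  "(\<And>x. x \<in> A \<Longrightarrow> polynomial_function (G x)) \<Longrightarrow> polynomial_function (\<lambda>a. \<Sum>x\<in>A. G x a)"
  by (induction A rule: infinite_finite_induct)
    (auto intro: polynomial_function_add polynomial_function_const)

definition coeffwise_polynomial :: "((nat \<Rightarrow> 'k::field) \<Rightarrow> ('n, 'k) pser) \<Rightarrow> bool" where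
  "coeffwise_polynomial Y \<longleftrightarrow> (\<forall>\<alpha>. polynomial_function (\<lambda>a. Y a \<alpha>))"

lemma coeffwise_polynomial_const: "coeffwise_polynomial (\<lambda>a. f)"
  by (simp add: coeffwise_polynomial_def polynomial_function_const)

lemma coeffwise_polynomial_ps_mult:
  "coeffwise_polynomial Y \<Longrightarrow> coeffwise_polynomial Y' \<Longrightarrow>
     coeffwise_polynomial (\<lambda>a. ps_mult (Y a) (Y' a))"
  unfolding coeffwise_polynomial_def ps_mult_def
  by (intro allI polynomial_function_sum polynomial_function_mult) blast+

lemma coeffwise_polynomial_ps_pow:
  "coeffwise_polynomial Y \<Longrightarrow> coeffwise_polynomial (\<lambda>a. ps_pow (Y a) k)"
proof (induction k)
  case 0
  then show ?case by (simp add: ps_pow_def coeffwise_polynomial_const)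
next
  case (Suc k)
  then have "coeffwise_polynomial (\<lambda>a. ps_mult (Y a) (ps_pow (Y a) k))"
    by (intro coeffwise_polynomial_ps_mult)
  then show ?case by (simp add: ps_pow_def)
qed

lemma coeffwise_polynomial_ps_monom:
  assumes "\<And>k. coeffwise_polynomial (\<lambda>a. y a k)"
  shows "coeffwise_polynomial (\<lambda>a. ps_monom s (y a) m)"
proof -
  have "coeffwise_polynomial (\<lambda>a. foldr (\<lambda>k acc. ps_mult (ps_pow (y a k) (m k)) acc) ks ps_one)"
    for ks
    by (induction ks)
      (simp_all add: coeffwise_polynomial_const coeffwise_polynomial_ps_mult
        coeffwise_polynomial_ps_pow assms)
  then show ?thesis unfolding ps_monom_def .
qed

lemma coeffwise_polynomial_pspoly_eval:
  assumes "\<And>k. coeffwise_polynomial (\<lambda>a. y a k)"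
  shows "coeffwise_polynomial (\<lambda>a. pspoly_eval s P (y a))"
proof -
  have "coeffwise_polynomial (\<lambda>a. ps_mult (P m) (ps_monom s (y a) m))" for m
    by (intro coeffwise_polynomial_ps_mult coeffwise_polynomial_const
        coeffwise_polynomial_ps_monom assms)
  then show ?thesis
    by (auto simp: coeffwise_polynomial_def pspoly_eval_def intro!: polynomial_function_sum)
qed

lemma coeffwise_polynomial_ps_deriv:
  "coeffwise_polynomial Y \<Longrightarrow> coeffwise_polynomial (\<lambda>a. ps_deriv j (Y a))"
  unfolding coeffwise_polynomial_def ps_deriv_def
  by (auto intro!: polynomial_function_mult polynomial_function_const)

definition series_of_vars :: "(nat \<Rightarrow> 'k::field) \<Rightarrow> nat \<Rightarrow> ('n::finite, 'k) pser" where
  "series_of_vars a i \<beta> = a (to_nat (i, \<beta>))"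

lemma coeffwise_polynomial_series_of_vars: "coeffwise_polynomial (\<lambda>a. series_of_vars a i)"
  by (simp add: coeffwise_polynomial_def series_of_vars_def polynomial_function_var)

lemma coeffwise_polynomial_subst_derivs:
  "coeffwise_polynomial (\<lambda>a. pspoly_eval s P (subst_derivs idx der (series_of_vars a)))"
  unfolding subst_derivs_def[abs_def]
  by (intro coeffwise_polynomial_pspoly_eval coeffwise_polynomial_ps_deriv
      coeffwise_polynomial_series_of_vars)

lemma series_of_vars_surj: "\<exists>a. series_of_vars a = z"
proof
  show "series_of_vars (\<lambda>n. case from_nat n of (i, \<beta>) \<Rightarrow> z i \<beta>) = z"
    by (simp add: series_of_vars_def fun_eq_iff)
qed

lemma aleph0_complete_common_zero:
  fixes G :: "'i \<Rightarrow> (nat \<Rightarrow> 'k::field) \<Rightarrow> 'k"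
  assumes K: "aleph0_complete TYPE('k)"
    and "countable I"
    and poly: "\<And>i. i \<in> I \<Longrightarrow> polynomial_function (G i)"
    and finite_zero: "\<And>C. C \<subseteq> I \<Longrightarrow> finite C \<Longrightarrow> \<exists>a. \<forall>i\<in>C. G i a = 0"
  shows "\<exists>a. \<forall>i\<in>I. G i a = 0"
proof -
  have "\<forall>i\<in>I. \<exists>p. \<forall>a. G i a = cpoly_eval p a"
    using poly unfolding polynomial_function_def by blast
  then obtain p where "\<forall>i\<in>I. \<forall>a. G i a = cpoly_eval (p i) a"
    by (rule bchoice[THEN exE])
  then have p: "\<And>i a. i \<in> I \<Longrightarrow> cpoly_eval (p i) a = G i a"
    by simp
  have "\<exists>a. \<forall>q\<in>T. cpoly_eval q a = 0" if "T \<subseteq> p ` I" "finite T" for T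
  proof -
    obtain C where C: "C \<subseteq> I" "finite C" "T = p ` C"
      using finite_subset_image[OF \<open>finite T\<close> \<open>T \<subseteq> p ` I\<close>] by blast
    then obtain a where "\<forall>i\<in>C. G i a = 0"
      using finite_zero by blast
    with C p have "\<forall>q\<in>T. cpoly_eval q a = 0"
      by auto
    then show ?thesis by blast
  qed
  then have "\<exists>a. \<forall>q\<in>p ` I. cpoly_eval q a = 0"
    using K[unfolded aleph0_complete_def, rule_format, OF countable_image[OF \<open>countable I\<close>]]
    by simp
  with p show ?thesis by auto
qed

lemma approx_solution_vanishes_on_finite:
  fixes H :: "nat \<Rightarrow> 'z \<Rightarrow> ('n::finite, 'k::field) pser"
  assumes "finite A"
    and approx: "\<forall>c. \<exists>z. \<forall>e<r. in_max_ideal_pow c (H e z)"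
  shows "\<exists>z. \<forall>e<r. \<forall>\<alpha>\<in>A. H e z \<alpha> = 0"
proof -
  define c where "c = Suc (\<Sum>\<alpha>\<in>A. \<Sum>i\<in>UNIV. \<alpha> i)"
  obtain z where z: "\<forall>e<r. in_max_ideal_pow c (H e z)"
    using approx by blast
  have "(\<Sum>i\<in>UNIV. \<alpha> i) < c" if "\<alpha> \<in> A" for \<alpha>
    unfolding c_def using member_le_sum[OF that _ \<open>finite A\<close>, of "\<lambda>\<alpha>. \<Sum>i\<in>UNIV. \<alpha> i"] by simp
  with z have "\<forall>e<r. \<forall>\<alpha>\<in>A. H e z \<alpha> = 0"
    by (simp add: in_max_ideal_pow_def)
  then show ?thesis by blast
qed

theorem corollary4p1:
  fixes F :: "nat \<Rightarrow> (nat \<Rightarrow> nat) \<Rightarrow> ('n::finite, 'k::field) pser"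
    and r q s :: nat
    and idx :: "nat \<Rightarrow> nat"
    and der :: "nat \<Rightarrow> ('n \<Rightarrow> nat)"
  assumes K: "aleph0_complete TYPE('k)"
    and F: "\<forall>e<r. is_pspoly s (F e)"
    and idx: "\<forall>k<s. idx k < q"
    and approx: "\<forall>c. \<exists>z :: nat \<Rightarrow> ('n, 'k) pser.
                   \<forall>e<r. in_max_ideal_pow c (pspoly_eval s (F e) (subst_derivs idx der z))"
  shows "\<exists>z :: nat \<Rightarrow> ('n, 'k) pser.
           \<forall>e<r. pspoly_eval s (F e) (subst_derivs idx der z) = (\<lambda>_. 0)"
proof -
  define H where "H e z = pspoly_eval s (F e) (subst_derivs idx der z)"
    for e and z :: "nat \<Rightarrow> ('n, 'k) pser"
  define G where "G = (\<lambda>(e, \<alpha>) a. H e (series_of_vars a) \<alpha>)"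
  define I where "I = {..<r} \<times> (UNIV :: ('n \<Rightarrow> nat) set)"
  have "\<exists>a. \<forall>i\<in>I. G i a = 0"
  proof (rule aleph0_complete_common_zero[OF K])
    show "countable I" unfolding I_def by simp
    show "polynomial_function (G i)" for i
      using coeffwise_polynomial_subst_derivs[unfolded coeffwise_polynomial_def, rule_format]
      by (cases i) (simp add: G_def H_def)
    show "\<exists>a. \<forall>i\<in>C. G i a = 0" if "C \<subseteq> I" "finite C" for C
    proof -
      obtain z where "\<forall>e<r. \<forall>\<alpha>\<in>snd ` C. H e z \<alpha> = 0"
        using approx_solution_vanishes_on_finite[OF finite_imageI[OF \<open>finite C\<close>]
            approx[folded H_def]] by blast
      moreover obtain a where "series_of_vars a = z"
        using series_of_vars_surj by blast
      ultimately have "\<forall>(e, \<alpha>)\<in>C. H e (series_of_vars a) \<alpha> = 0"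
        using \<open>C \<subseteq> I\<close> unfolding I_def by fastforce
      then have "\<forall>i\<in>C. G i a = 0"
        by (auto simp: G_def)
      then show ?thesis by blast
    qed
  qed
  then obtain a where "\<forall>i\<in>I. G i a = 0" by blast
  then show ?thesis by (auto simp: G_def H_def I_def fun_eq_iff)
qed

end
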